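(* Let $\langle E,\rightarrow\rangle$ be a computation, $b$ a regular predicate, and $e\in E$. Then $J_b(e)$ is a join-irreducible element of the distributive lattice $\langle \mathcal{C}_b(E);\subseteq\rangle$.
   Context: A computation is a directed graph $\langle E, \rightarrow\rangle$ whose vertices (events) are partitioned among processes $p_1,\dots,p_n$, each process $p_i$ having an initial event $\bot_i$ and a final event $\top_i$; $\top$ denotes the set of final events. A subset $C\subseteq E$ is a consistent cut if for every edge $(u,v)$, $v\in C$ implies $u\in C$; $\emptyset$ and $E$ are trivial. A predicate is regular if whenever consistent cuts $C_1,C_2$ satisfy it, so do $C_1\cap C_2$ and $C_1\cup C_2$. $\mathcal{C}_b(E)$ denotes the set of non-trivial consistent cuts of $\langle E,\rightarrow\rangle$ satisfying $b$ together with the two trivial cuts $\emptyset$ and $E$ (the trivial cuts are treated as satisfying $b$); ordered by inclusion it is a distributive lattice with join $\cup$ and meet $\cap$. For an event $e$, $J_b(e)$ is the least consistent cut of $\langle E,\rightarrow\rangle$ that satisfies $b$ and contains $e$; if no such cut exists or $e\in\top$, $J_b(e)=E$. An element $a$ of a lattice is join-irreducible if it is not the least element and $a=x\sqcup y$ implies $a=x$ or $a=y$. *)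

theory Defs
  imports Main
begin

text \<open>A computation: events E, edge relation R (u,v) meaning u -> v, n processes
  indexed by {..<n}, proc assigns each event its process, ini i / fin i (\<bottom>_i, \<top>_i) are the
  initial / final events of process i. Following the standard convention of the
  slicing framework, all initial events are mutually connected and all final
  events are mutually connected, so a non-trivial consistent cut contains all
  initial events and no final event.\<close>

definition computation ::
  "'e set \<Rightarrow> ('e \<times> 'e) set \<Rightarrow> nat \<Rightarrow> ('e \<Rightarrow> nat) \<Rightarrow> (nat \<Rightarrow> 'e) \<Rightarrow> (nat \<Rightarrow> 'e) \<Rightarrow> bool" where
  "computation E R n proc ini fin \<longleftrightarrow>
     finite E \<and> 0 < n \<and> R \<subseteq> E \<times> E \<and>
     (\<forall>e\<in>E. proc e < n) \<and>
     (\<forall>i<n. ini i \<in> E \<and> fin i \<in> E \<and> proc (ini i) = i \<and> proc (fin i) = i \<and> ini i \<noteq> fin i) \<and>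
     (\<forall>e\<in>E. (ini (proc e), e) \<in> R\<^sup>* \<and> (e, fin (proc e)) \<in> R\<^sup>*) \<and>
     (\<forall>e\<in>E. \<forall>f\<in>E. proc e = proc f \<longrightarrow> (e, f) \<in> R\<^sup>* \<or> (f, e) \<in> R\<^sup>*) \<and>
     (\<forall>i<n. \<forall>j<n. i \<noteq> j \<longrightarrow> (ini i, ini j) \<in> R \<and> (fin i, fin j) \<in> R)"

definition consistent_cut :: "'e set \<Rightarrow> ('e \<times> 'e) set \<Rightarrow> 'e set \<Rightarrow> bool" where
  "consistent_cut E R C \<longleftrightarrow> C \<subseteq> E \<and> (\<forall>(u, v)\<in>R. v \<in> C \<longrightarrow> u \<in> C)"

definition regular :: "'e set \<Rightarrow> ('e \<times> 'e) set \<Rightarrow> ('e set \<Rightarrow> bool) \<Rightarrow> bool" where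
  "regular E R b \<longleftrightarrow>
     (\<forall>C1 C2. consistent_cut E R C1 \<and> b C1 \<and> consistent_cut E R C2 \<and> b C2 \<longrightarrow>
        b (C1 \<inter> C2) \<and> b (C1 \<union> C2))"

definition sat :: "'e set \<Rightarrow> ('e set \<Rightarrow> bool) \<Rightarrow> 'e set \<Rightarrow> bool" where
  "sat E b C \<longleftrightarrow> C = {} \<or> C = E \<or> b C"

definition Cb :: "'e set \<Rightarrow> ('e \<times> 'e) set \<Rightarrow> ('e set \<Rightarrow> bool) \<Rightarrow> 'e set set" where
  "Cb E R b = {C. consistent_cut E R C \<and> sat E b C}"

definition least_b_cut :: "'e set \<Rightarrow> ('e \<times> 'e) set \<Rightarrow> ('e set \<Rightarrow> bool) \<Rightarrow> 'e \<Rightarrow> 'e set \<Rightarrow> bool" where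
  "least_b_cut E R b e C \<longleftrightarrow> consistent_cut E R C \<and> sat E b C \<and> e \<in> C \<and>
     (\<forall>D. consistent_cut E R D \<and> sat E b D \<and> e \<in> D \<longrightarrow> C \<subseteq> D)"

text \<open>J_b(e); Tops is the set of final events.\<close>
definition Jb :: "'e set \<Rightarrow> ('e \<times> 'e) set \<Rightarrow> 'e set \<Rightarrow> ('e set \<Rightarrow> bool) \<Rightarrow> 'e \<Rightarrow> 'e set" where
  "Jb E R Tops b e =
     (if e \<in> Tops \<or> \<not> (\<exists>C. least_b_cut E R b e C) then E
      else (THE C. least_b_cut E R b e C))"

definition join_irreducible :: "'e set set \<Rightarrow> 'e set \<Rightarrow> bool" where
  "join_irreducible L a \<longleftrightarrow> a \<in> L \<and> \<not> (\<forall>x\<in>L. a \<subseteq> x) \<and>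
     (\<forall>x\<in>L. \<forall>y\<in>L. a = x \<union> y \<longrightarrow> a = x \<or> a = y)"

end

theory Submission
  imports Defs
begin

text \<open>Both values of \<open>J\<^sub>b(e)\<close> are least elements of \<open>\<C>\<^sub>b(E)\<close> containing a fixed event:
  the least \<open>b\<close>-cut containing \<open>e\<close> contains \<open>e\<close>, and \<open>E\<close> is the only consistent cut
  containing a final event, because final events are mutually connected and every event
  precedes the final event of its process. An element of a lattice of sets that is the least
  one containing some point is join-irreducible as soon as some element misses that point,
  and here the empty cut does.\<close>

lemma join_irreducible_if_least_containing:
  assumes "a \<in> L" "x \<in> a" "\<And>c. c \<in> L \<Longrightarrow> x \<in> c \<Longrightarrow> a \<subseteq> c" "c\<^sub>0 \<in> L" "x \<notin> c\<^sub>0"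
  shows "join_irreducible L a"
  unfolding join_irreducible_def
proof (intro conjI ballI impI)
  show "\<not> (\<forall>c\<in>L. a \<subseteq> c)" using assms(2,4,5) by blast
next
  fix c d assume "c \<in> L" "d \<in> L" "a = c \<union> d"
  then show "a = c \<or> a = d" using assms(2,3) by blast
qed (fact assms(1))

lemma consistent_cut_rtrancl_closed:
  assumes "consistent_cut E R C" "(u, v) \<in> R\<^sup>*" "v \<in> C"
  shows "u \<in> C"
  using assms(2,3)
proof (induction rule: converse_rtrancl_induct)
  case (step y z)
  then show ?case using assms(1) unfolding consistent_cut_def by blast
qed

lemma consistent_cut_eq_if_fin_mem:
  assumes comp: "computation E R n proc ini fin" and C: "consistent_cut E R C"
    and "j < n" "fin j \<in> C"
  shows "C = E"
proof
  show "C \<subseteq> E" using C unfolding consistent_cut_def by blast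
  show "E \<subseteq> C"
  proof
    fix f assume f: "f \<in> E"
    have "fin (proc f) \<in> C"
    proof (cases "proc f = j")
      case False
      moreover have "proc f < n" using comp f unfolding computation_def by blast
      ultimately have "(fin (proc f), fin j) \<in> R"
        using comp \<open>j < n\<close> unfolding computation_def by blast
      then show ?thesis using C \<open>fin j \<in> C\<close> unfolding consistent_cut_def by blast
    qed (use \<open>fin j \<in> C\<close> in simp)
    moreover have "(f, fin (proc f)) \<in> R\<^sup>*" using comp f unfolding computation_def by blast
    ultimately show "f \<in> C" using consistent_cut_rtrancl_closed[OF C] by blast
  qed
qed

lemma empty_mem_Cb: "{} \<in> Cb E R b"
  unfolding Cb_def consistent_cut_def sat_def by simp

lemma carrier_mem_Cb: "R \<subseteq> E \<times> E \<Longrightarrow> E \<in> Cb E R b"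
  unfolding Cb_def consistent_cut_def sat_def by auto

lemma least_b_cut_mem_Cb: "least_b_cut E R b e C \<Longrightarrow> C \<in> Cb E R b"
  unfolding least_b_cut_def Cb_def by blast

lemma least_b_cut_subset:
  "least_b_cut E R b e C \<Longrightarrow> D \<in> Cb E R b \<Longrightarrow> e \<in> D \<Longrightarrow> C \<subseteq> D"
  unfolding least_b_cut_def Cb_def by blast

lemma Jb_eq_least_b_cut:
  assumes "e \<notin> Tops" "least_b_cut E R b e C"
  shows "Jb E R Tops b e = C"
proof -
  have "(THE C. least_b_cut E R b e C) = C"
    using assms(2) by (rule the_equality) (use assms(2) in \<open>auto simp: least_b_cut_def\<close>)
  then show ?thesis using assms unfolding Jb_def by auto
qed

lemma Jb_eq_carrier:
  "e \<in> Tops \<or> \<not> (\<exists>C. least_b_cut E R b e C) \<Longrightarrow> Jb E R Tops b e = E"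
  unfolding Jb_def by simp

theorem lemma4:
  fixes E :: "'e set" and R :: "('e \<times> 'e) set" and n :: nat
    and proc :: "'e \<Rightarrow> nat" and ini fin :: "nat \<Rightarrow> 'e"
    and b :: "'e set \<Rightarrow> bool" and e :: 'e
  assumes "computation E R n proc ini fin"
    and "regular E R b"
    and "e \<in> E"
  shows "join_irreducible (Cb E R b) (Jb E R (fin ` {..<n}) b e)"
proof (cases "e \<in> fin ` {..<n} \<or> \<not> (\<exists>C. least_b_cut E R b e C)")
  case True
  have "R \<subseteq> E \<times> E" "0 < n" "fin 0 \<in> E" using assms(1) unfolding computation_def by auto
  moreover have "E \<subseteq> c" if "c \<in> Cb E R b" "fin 0 \<in> c" for c
    using consistent_cut_eq_if_fin_mem[OF assms(1) _ \<open>0 < n\<close>] that unfolding Cb_def by blast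
  ultimately show ?thesis
    unfolding Jb_eq_carrier[OF True]
    by (intro join_irreducible_if_least_containing[where x = "fin 0" and c\<^sub>0 = "{}"]
        carrier_mem_Cb empty_mem_Cb) auto
next
  case False
  then obtain C where C: "least_b_cut E R b e C" and "e \<notin> fin ` {..<n}" by blast
  moreover have "e \<in> C" using C unfolding least_b_cut_def by blast
  ultimately show ?thesis
    unfolding Jb_eq_least_b_cut[OF \<open>e \<notin> fin ` {..<n}\<close> C]
    using least_b_cut_mem_Cb[OF C] least_b_cut_subset[OF C] empty_mem_Cb
    by (intro join_irreducible_if_least_containing[where x = e and c\<^sub>0 = "{}"]) auto
qed

end
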